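(* Consider the problem of minimizing $f(x)$ over $x\in Q$ subject to $g(x)\le0$, where $f,g:Q\to\mathbb{R}$ are convex, and let $x_*$ be a solution. Let $\delta\ge0$, $\varepsilon>0$, suppose $\|\nabla_\delta g(x)\|_*\le M_g$ for all $x\in Q$, let $x^0=\arg\min_{x\in Q}d(x)$ and let $\Theta_0>0$ satisfy $V(x_*,x^0)\le\Theta_0^2$. Run the following Algorithm C: set $I=\emptyset$; for $N=0,1,2,\dots$: if $g(x^N)\le\varepsilon\|\nabla_\delta g(x^N)\|_*+\delta$ (productive step), put $h_N=\varepsilon/\|\nabla_\delta f(x^N)\|_*$, $x^{N+1}=\mathrm{Mirr}_{x^N}(h_N\nabla_\delta f(x^N))$ and add $N$ to $I$; otherwise (non-productive step), put $h_N=\varepsilon/\|\nabla_\delta g(x^N)\|_*$ and $x^{N+1}=\mathrm{Mirr}_{x^N}(h_N\nabla_\delta g(x^N))$. Stop as soon as the total number $N$ of performed iterations satisfies $N\ge 2\Theta_0^2/\varepsilon^2$. Assume that $\nabla_\delta f(x^k)\ne0$ at every productive step. Then, when the algorithm stops, $I\ne\emptyset$ and $$\min_{k\in I}v_f^\delta(x^k,x_* )\le\varepsilon,\qquad \max_{k\in I}g(x^k)\le M_g\varepsilon+\delta.$$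
   Context: $Q\subseteq\mathbb{R}^n$ is closed and convex; $\|\cdot\|$ is a norm on $\mathbb{R}^n$, $\|\cdot\|_*$ its dual norm. For a convex function $\varphi$ on $Q$ and $\delta\ge0$, a $\delta$-subgradient of $\varphi$ at $x\in Q$ is a vector $\nabla_\delta\varphi(x)$ with $\varphi(y)-\varphi(x)\ge\langle\nabla_\delta\varphi(x),y-x\rangle-\delta$ for all $y\in Q$; for each $x$ one such vector is fixed and used throughout. $v_f^\delta(x,y)=\big\langle\nabla_\delta f(x)/\|\nabla_\delta f(x)\|_*,\ x-y\big\rangle$ if $\nabla_\delta f(x)\ne0$ and $v_f^\delta(x,y)=0$ otherwise. $d:Q\to\mathbb{R}$ is differentiable and 1-strongly convex on $Q$ w.r.t. $\|\cdot\|$; $V(y,x)=d(y)-d(x)-\langle\nabla d(x),y-x\rangle$; $\mathrm{Mirr}_x(p)=\arg\min_{u\in Q}\{\langle p,u\rangle+V(u,x)\}$. *)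

theory Defs
  imports "HOL-Analysis.Analysis"
begin

definition is_norm :: "('a::euclidean_space \<Rightarrow> real) \<Rightarrow> bool" where
  "is_norm nrm \<longleftrightarrow>
     (\<forall>x. 0 \<le> nrm x) \<and> (\<forall>x. nrm x = 0 \<longleftrightarrow> x = 0) \<and>
     (\<forall>c x. nrm (c *\<^sub>R x) = \<bar>c\<bar> * nrm x) \<and>
     (\<forall>x y. nrm (x + y) \<le> nrm x + nrm y)"

definition dual_norm :: "('a::euclidean_space \<Rightarrow> real) \<Rightarrow> 'a \<Rightarrow> real" where
  "dual_norm nrm p = Sup {p \<bullet> u | u. nrm u \<le> 1}"

definition is_delta_subgrad :: "'a::euclidean_space set \<Rightarrow> ('a \<Rightarrow> real) \<Rightarrow> real \<Rightarrow> 'a \<Rightarrow> 'a \<Rightarrow> bool" where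
  "is_delta_subgrad Q phi \<delta> x p \<longleftrightarrow> (\<forall>y\<in>Q. phi y - phi x \<ge> p \<bullet> (y - x) - \<delta>)"

definition v_delta :: "('a::euclidean_space \<Rightarrow> real) \<Rightarrow> ('a \<Rightarrow> 'a) \<Rightarrow> 'a \<Rightarrow> 'a \<Rightarrow> real" where
  "v_delta nrm gf x y = (if gf x \<noteq> 0 then (gf x /\<^sub>R dual_norm nrm (gf x)) \<bullet> (x - y) else 0)"

definition strongly_convex_1 :: "('a::euclidean_space \<Rightarrow> real) \<Rightarrow> 'a set \<Rightarrow> ('a \<Rightarrow> real) \<Rightarrow> bool" where
  "strongly_convex_1 nrm Q d \<longleftrightarrow>
     (\<forall>x\<in>Q. \<forall>y\<in>Q. \<forall>t::real. 0 \<le> t \<and> t \<le> 1 \<longrightarrow>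
        d (t *\<^sub>R x + (1 - t) *\<^sub>R y) \<le> t * d x + (1 - t) * d y - t * (1 - t) / 2 * (nrm (x - y))\<^sup>2)"

definition bregman :: "('a::euclidean_space \<Rightarrow> real) \<Rightarrow> ('a \<Rightarrow> 'a) \<Rightarrow> 'a \<Rightarrow> 'a \<Rightarrow> real" where
  "bregman d dd y x = d y - d x - dd x \<bullet> (y - x)"

definition is_mirr :: "'a::euclidean_space set \<Rightarrow> ('a \<Rightarrow> real) \<Rightarrow> ('a \<Rightarrow> 'a) \<Rightarrow> 'a \<Rightarrow> 'a \<Rightarrow> 'a \<Rightarrow> bool" where
  "is_mirr Q d dd x p u \<longleftrightarrow> u \<in> Q \<and>
     (\<forall>w\<in>Q. p \<bullet> u + bregman d dd u x \<le> p \<bullet> w + bregman d dd w x)"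

definition productive :: "('a::euclidean_space \<Rightarrow> real) \<Rightarrow> ('a \<Rightarrow> real) \<Rightarrow> ('a \<Rightarrow> 'a) \<Rightarrow> real \<Rightarrow> real \<Rightarrow> 'a \<Rightarrow> bool" where
  "productive nrm g gg \<epsilon> \<delta> x \<longleftrightarrow> g x \<le> \<epsilon> * dual_norm nrm (gg x) + \<delta>"

definition stop_iter :: "real \<Rightarrow> real \<Rightarrow> nat" where
  "stop_iter \<Theta>0 \<epsilon> = (LEAST N::nat. real N \<ge> 2 * \<Theta>0\<^sup>2 / \<epsilon>\<^sup>2)"

end

theory Submission
  imports Defs
begin

text \<open>
  Track the potential V k = V(x_*, x^k). Each mirror step of length \<epsilon> along a normalized
  \<delta>-subgradient direction p/||p||_* satisfies the three-point inequality
  \<epsilon> <p/||p||_*, x^k - x_*> \<le> \<epsilon>^2/2 + V k - V (k+1).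
  At a non-productive step, the \<delta>-subgradient inequality of g at the feasible point x_*
  makes the inner product on the left exceed \<epsilon>. So if no productive step had
  v_f(x^k, x_*) \<le> \<epsilon>, every step would decrease V by more than \<epsilon>^2/2, and
  N \<ge> 2 \<Theta>0^2 / \<epsilon>^2 steps would push V below V 0 - \<Theta>0^2 \<le> 0, contradicting V \<ge> 0.
  The bound on g at productive points is the productivity test together with ||\<nabla>g||_* \<le> Mg.\<close>

lemma is_norm_minus: "is_norm nrm \<Longrightarrow> nrm (- v) = nrm v"
  using is_norm_def[of nrm] by (metis abs_minus_cancel abs_one mult_1 scaleR_minus1_left)

lemma is_norm_ge_scaled_norm:
  fixes nrm :: "'a::euclidean_space \<Rightarrow> real"
  assumes n: "is_norm nrm" shows "\<exists>m>0. \<forall>u. m * norm u \<le> nrm u"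
proof -
  have cv: "convex_on UNIV nrm"
    unfolding convex_on_def
  proof (intro conjI ballI allI impI convex_UNIV)
    fix x y :: 'a and u v :: real assume "u \<ge> 0" "v \<ge> 0" "u + v = 1"
    then show "nrm (u *\<^sub>R x + v *\<^sub>R y) \<le> u * nrm x + v * nrm y"
      using n unfolding is_norm_def by (metis abs_of_nonneg order_trans order_refl)
  qed
  hence ct: "continuous_on (sphere 0 1) nrm"
    using convex_on_continuous[of UNIV nrm] continuous_on_subset by blast
  obtain x0 where x0: "x0 \<in> sphere (0::'a) 1" "\<forall>y\<in>sphere 0 1. nrm x0 \<le> nrm y"
    using continuous_attains_inf[OF compact_sphere _ ct] sphere_eq_empty[of "0::'a" 1] by auto
  have "x0 \<noteq> 0" using x0 by auto
  hence m: "nrm x0 > 0" using n unfolding is_norm_def by (metis order_le_less)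
  show ?thesis
  proof (intro exI[of _ "nrm x0"] conjI m allI)
    fix u :: 'a
    show "nrm x0 * norm u \<le> nrm u"
    proof (cases "u = 0")
      case True then show ?thesis using n by (simp add: is_norm_def)
    next
      case False
      have "(1 / norm u) *\<^sub>R u \<in> sphere 0 1" using False by simp
      hence "nrm x0 \<le> nrm ((1 / norm u) *\<^sub>R u)" using x0 by blast
      also have "\<dots> = nrm u / norm u" using n unfolding is_norm_def by simp
      finally show ?thesis using False by (simp add: field_simps)
    qed
  qed
qed

lemma bdd_above_dual_norm_set:
  fixes nrm :: "'a::euclidean_space \<Rightarrow> real"
  assumes n: "is_norm nrm" shows "bdd_above {p \<bullet> u | u. nrm u \<le> 1}"
proof -
  obtain m where m: "m > 0" "\<forall>u. m * norm u \<le> nrm u" using is_norm_ge_scaled_norm[OF n] by blast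
  show ?thesis unfolding bdd_above_def
  proof (intro exI[of _ "norm p / m"] ballI)
    fix y assume "y \<in> {p \<bullet> u | u. nrm u \<le> 1}"
    then obtain u where u: "y = p \<bullet> u" "nrm u \<le> 1" by blast
    have "m * norm u \<le> 1" using m u by (meson order_trans)
    hence "norm u \<le> 1 / m" using m by (simp add: field_simps)
    have "y \<le> norm p * norm u" using u norm_cauchy_schwarz by simp
    also have "\<dots> \<le> norm p * (1/m)" by (rule mult_left_mono) (use \<open>norm u \<le> 1/m\<close> in auto)
    finally show "y \<le> norm p / m" by simp
  qed
qed

lemma inner_le_dual_norm:
  fixes nrm :: "'a::euclidean_space \<Rightarrow> real"
  assumes n: "is_norm nrm" shows "p \<bullet> w \<le> dual_norm nrm p * nrm w"
proof (cases "w = 0")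
  case True
  have "nrm 0 = 0" using n unfolding is_norm_def by blast
  with True show ?thesis by simp
next
  case False
  hence pos: "nrm w > 0" using n unfolding is_norm_def by (metis order_le_less)
  have "nrm ((1 / nrm w) *\<^sub>R w) = 1" using n pos False unfolding is_norm_def by simp
  hence mem: "p \<bullet> ((1 / nrm w) *\<^sub>R w) \<in> {p \<bullet> u | u. nrm u \<le> 1}" by fastforce
  have "p \<bullet> ((1 / nrm w) *\<^sub>R w) \<le> dual_norm nrm p"
    unfolding dual_norm_def by (rule cSup_upper[OF mem bdd_above_dual_norm_set[OF n]])
  then show ?thesis using pos by (simp add: field_simps)
qed

lemma dual_norm_pos:
  fixes nrm :: "'a::euclidean_space \<Rightarrow> real"
  assumes n: "is_norm nrm" and p: "p \<noteq> 0" shows "dual_norm nrm p > 0"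
proof -
  have "0 < p \<bullet> p" using p by simp
  also have "\<dots> \<le> dual_norm nrm p * nrm p" by (rule inner_le_dual_norm[OF n])
  finally have "0 < dual_norm nrm p * nrm p" .
  moreover have "0 \<le> nrm p" using n unfolding is_norm_def by blast
  ultimately show ?thesis by (meson mult_nonpos_nonneg not_le)
qed

lemma dual_norm_zero: assumes n: "is_norm nrm" shows "dual_norm nrm 0 = 0"
proof -
  have "nrm 0 = 0" using n unfolding is_norm_def by blast
  hence "{0 \<bullet> u | u. nrm u \<le> 1} = {0::real}" by (intro set_eqI) (auto intro!: exI[of _ 0])
  thus ?thesis unfolding dual_norm_def by simp
qed

lemma segment_difference_quotient_tendsto:
  fixes d :: "'a::euclidean_space \<Rightarrow> real"
  assumes Q: "convex Q" and a: "a \<in> Q" and b: "b \<in> Q"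
    and d_diff: "\<forall>y\<in>Q. (d has_derivative (\<lambda>h. dd y \<bullet> h)) (at y within Q)"
  shows "((\<lambda>t. (d (a + t *\<^sub>R (b - a)) - d a) / t) \<longlongrightarrow> dd a \<bullet> (b - a)) (at 0 within {0..1})"
proof -
  let ?g = "\<lambda>t::real. a + t *\<^sub>R (b - a)"
  have g: "(?g has_derivative (\<lambda>t. t *\<^sub>R (b - a))) (at 0 within {0..1})"
    by (auto intro!: derivative_eq_intros)
  have sub: "?g ` {0..1} \<subseteq> Q"
  proof
    fix y assume "y \<in> ?g ` {0..1}"
    then obtain t where t: "t \<in> {0..1}" "y = ?g t" by blast
    have "y = (1 - t) *\<^sub>R a + t *\<^sub>R b" using t by (simp add: algebra_simps)
    thus "y \<in> Q" using Q a b t unfolding convex_def by auto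
  qed
  have dd: "(d has_derivative (\<lambda>h. dd a \<bullet> h)) (at (?g 0) within ?g ` {0..1})"
    using has_derivative_subset[OF d_diff[rule_format, OF a] sub] by simp
  have "((d \<circ> ?g) has_derivative ((\<lambda>h. dd a \<bullet> h) \<circ> (\<lambda>t. t *\<^sub>R (b - a)))) (at 0 within {0..1})"
    by (rule diff_chain_within[OF g dd])
  moreover have "((\<lambda>h. dd a \<bullet> h) \<circ> (\<lambda>t. t *\<^sub>R (b - a))) = (*) (dd a \<bullet> (b - a))"
    by (auto simp: fun_eq_iff)
  ultimately have "((d \<circ> ?g) has_field_derivative (dd a \<bullet> (b - a))) (at 0 within {0..1})"
    unfolding has_field_derivative_def by simp
  thus ?thesis unfolding has_field_derivative_iff by (simp add: o_def)
qed

lemma bregman_ge_half_sq: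
  fixes d :: "'a::euclidean_space \<Rightarrow> real"
  assumes Q: "convex Q" and a: "a \<in> Q" and b: "b \<in> Q"
    and d_diff: "\<forall>y\<in>Q. (d has_derivative (\<lambda>h. dd y \<bullet> h)) (at y within Q)"
    and d_sc: "strongly_convex_1 nrm Q d"
  shows "bregman d dd a b \<ge> (nrm (a - b))\<^sup>2 / 2"
proof -
  let ?n = "(nrm (a - b))\<^sup>2"
  have lim1: "((\<lambda>t. (d (b + t *\<^sub>R (a - b)) - d b) / t) \<longlongrightarrow> dd b \<bullet> (a - b)) (at 0 within {0..1})"
    by (rule segment_difference_quotient_tendsto[OF Q b a d_diff])
  have lim2: "((\<lambda>t::real. d a - d b - (1 - t) / 2 * ?n) \<longlongrightarrow> d a - d b - (1 - 0) / 2 * ?n) (at 0 within {0..1})"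
    by (intro tendsto_intros) auto
  have ev: "\<forall>\<^sub>F t in at 0 within {0..1}. (d (b + t *\<^sub>R (a - b)) - d b) / t \<le> d a - d b - (1 - t) / 2 * ?n"
    unfolding eventually_at_filter
  proof (intro always_eventually allI impI)
    fix t :: real assume t: "t \<noteq> 0" "t \<in> {0..1}"
    hence tp: "t > 0" by auto
    have eq: "b + t *\<^sub>R (a - b) = t *\<^sub>R a + (1 - t) *\<^sub>R b" by (simp add: algebra_simps)
    have "d (t *\<^sub>R a + (1 - t) *\<^sub>R b) \<le> t * d a + (1 - t) * d b - t * (1 - t) / 2 * ?n"
      using d_sc a b t unfolding strongly_convex_1_def by auto
    hence "d (b + t *\<^sub>R (a - b)) - d b \<le> t * (d a - d b - (1 - t) / 2 * ?n)"
      unfolding eq by (simp add: algebra_simps)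
    thus "(d (b + t *\<^sub>R (a - b)) - d b) / t \<le> d a - d b - (1 - t) / 2 * ?n"
      using tp by (simp add: divide_le_eq mult.commute)
  qed
  have "dd b \<bullet> (a - b) \<le> d a - d b - (1 - 0) / 2 * ?n"
    by (rule tendsto_le[OF _ lim2 lim1 ev]) (simp add: at_within_Icc_at_right)
  thus ?thesis unfolding bregman_def by simp
qed

lemma bregman_nonneg:
  fixes d :: "'a::euclidean_space \<Rightarrow> real"
  assumes "convex Q" and "a \<in> Q" and "b \<in> Q"
    and "\<forall>y\<in>Q. (d has_derivative (\<lambda>h. dd y \<bullet> h)) (at y within Q)"
    and "strongly_convex_1 nrm Q d"
  shows "0 \<le> bregman d dd a b"
  using bregman_ge_half_sq[OF assms] zero_le_power2[of "nrm (a - b)"] by linarith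

lemma is_mirr_variational_ineq:
  fixes d :: "'a::euclidean_space \<Rightarrow> real"
  assumes Q: "convex Q" and z: "z \<in> Q"
    and d_diff: "\<forall>y\<in>Q. (d has_derivative (\<lambda>h. dd y \<bullet> h)) (at y within Q)"
    and mirr: "is_mirr Q d dd x p u"
  shows "(p + dd u - dd x) \<bullet> (z - u) \<ge> 0"
proof -
  have u: "u \<in> Q" using mirr unfolding is_mirr_def by blast
  let ?c = "- ((p - dd x) \<bullet> (z - u))"
  have lim1: "((\<lambda>t. (d (u + t *\<^sub>R (z - u)) - d u) / t) \<longlongrightarrow> dd u \<bullet> (z - u)) (at 0 within {0..1})"
    by (rule segment_difference_quotient_tendsto[OF Q u z d_diff])
  have ev: "\<forall>\<^sub>F t in at 0 within {0..1}. ?c \<le> (d (u + t *\<^sub>R (z - u)) - d u) / t"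
    unfolding eventually_at_filter
  proof (intro always_eventually allI impI)
    fix t :: real assume t: "t \<noteq> 0" "t \<in> {0..1}"
    hence tp: "t > 0" by auto
    let ?w = "u + t *\<^sub>R (z - u)"
    have "?w = (1 - t) *\<^sub>R u + t *\<^sub>R z" by (simp add: algebra_simps)
    hence wQ: "?w \<in> Q" using Q u z t unfolding convex_def by auto
    have "p \<bullet> u + bregman d dd u x \<le> p \<bullet> ?w + bregman d dd ?w x"
      using mirr wQ unfolding is_mirr_def by blast
    moreover have "p \<bullet> ?w = p \<bullet> u + t * (p \<bullet> (z - u))" by (simp add: inner_add_right)
    moreover have "dd x \<bullet> (?w - x) = dd x \<bullet> (u - x) + t * (dd x \<bullet> (z - u))"
      by (simp add: inner_add_right inner_diff_right)
    moreover have "t * ((p - dd x) \<bullet> (z - u)) = t * (p \<bullet> (z - u)) - t * (dd x \<bullet> (z - u))"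
      by (simp add: inner_diff_left right_diff_distrib)
    ultimately have "0 \<le> t * ((p - dd x) \<bullet> (z - u)) + (d ?w - d u)"
      unfolding bregman_def by linarith
    hence "t * ?c \<le> d ?w - d u" by (simp add: algebra_simps)
    thus "?c \<le> (d ?w - d u) / t" using tp by (simp add: le_divide_eq mult.commute)
  qed
  have "?c \<le> dd u \<bullet> (z - u)"
    by (rule tendsto_lowerbound[OF lim1 ev]) (simp add: at_within_Icc_at_right)
  moreover have "(p + dd u - dd x) \<bullet> (z - u) = (p - dd x) \<bullet> (z - u) + dd u \<bullet> (z - u)"
    by (simp add: inner_add_left inner_diff_left)
  ultimately show ?thesis by linarith
qed

lemma mirror_step_three_point:
  fixes d :: "'a::euclidean_space \<Rightarrow> real"
  assumes Q: "convex Q" and n: "is_norm nrm" and x: "x \<in> Q" and z: "z \<in> Q"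
    and d_diff: "\<forall>y\<in>Q. (d has_derivative (\<lambda>h. dd y \<bullet> h)) (at y within Q)"
    and d_sc: "strongly_convex_1 nrm Q d"
    and mirr: "is_mirr Q d dd x p u"
    and L: "\<forall>w. p \<bullet> w \<le> L * nrm w"
  shows "p \<bullet> (x - z) \<le> L\<^sup>2 / 2 + bregman d dd z x - bregman d dd z u"
proof -
  have u: "u \<in> Q" using mirr unfolding is_mirr_def by blast
  have opt: "(p + dd u - dd x) \<bullet> (z - u) \<ge> 0" by (rule is_mirr_variational_ineq[OF Q z d_diff mirr])
  have id: "bregman d dd z x - bregman d dd z u - bregman d dd u x = (dd u - dd x) \<bullet> (z - u)"
    unfolding bregman_def inner_diff_right inner_diff_left by linarith
  have bl: "bregman d dd u x \<ge> (nrm (u - x))\<^sup>2 / 2" by (rule bregman_ge_half_sq[OF Q u x d_diff d_sc])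
  have nn: "nrm (x - u) = nrm (u - x)" using is_norm_minus[OF n, of "u - x"] by simp
  have pl: "p \<bullet> (x - u) \<le> L * nrm (u - x)" using L nn by metis
  have sq: "L * nrm (u - x) \<le> L\<^sup>2 / 2 + (nrm (u - x))\<^sup>2 / 2"
  proof -
    have "0 \<le> (L - nrm (u - x))\<^sup>2" by simp
    thus ?thesis unfolding power2_diff by linarith
  qed
  have "p \<bullet> (x - z) = p \<bullet> (x - u) - p \<bullet> (z - u)" by (simp add: inner_diff_right)
  also have "\<dots> \<le> p \<bullet> (x - u) + (dd u - dd x) \<bullet> (z - u)"
    using opt by (simp add: inner_add_left inner_diff_left)
  finally show ?thesis using id bl pl sq by linarith
qed

lemma inner_scaled_le_dual_norm:
  fixes nrm :: "'a::euclidean_space \<Rightarrow> real"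
  assumes n: "is_norm nrm" and e: "0 \<le> e"
  shows "((e / dual_norm nrm p) *\<^sub>R p) \<bullet> w \<le> e * nrm w"
proof (cases "p = 0")
  case True then show ?thesis using n e unfolding is_norm_def by simp
next
  case False
  hence D: "dual_norm nrm p > 0" by (rule dual_norm_pos[OF n])
  have "((e / dual_norm nrm p) *\<^sub>R p) \<bullet> w = (e / dual_norm nrm p) * (p \<bullet> w)" by simp
  also have "\<dots> \<le> (e / dual_norm nrm p) * (dual_norm nrm p * nrm w)"
    by (rule mult_left_mono[OF inner_le_dual_norm[OF n]]) (use e D in simp)
  also have "\<dots> = e * nrm w" using D by simp
  finally show ?thesis .
qed

lemma normalized_mirror_step:
  fixes d :: "'a::euclidean_space \<Rightarrow> real"
  assumes Q: "convex Q" and n: "is_norm nrm" and x: "x \<in> Q" and z: "z \<in> Q" and e: "0 \<le> e"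
    and d_diff: "\<forall>y\<in>Q. (d has_derivative (\<lambda>h. dd y \<bullet> h)) (at y within Q)"
    and d_sc: "strongly_convex_1 nrm Q d"
    and mirr: "is_mirr Q d dd x ((e / dual_norm nrm p) *\<^sub>R p) u"
  shows "e * ((p /\<^sub>R dual_norm nrm p) \<bullet> (x - z))
           \<le> e\<^sup>2 / 2 + bregman d dd z x - bregman d dd z u"
proof -
  have "((e / dual_norm nrm p) *\<^sub>R p) \<bullet> (x - z) \<le> e\<^sup>2 / 2 + bregman d dd z x - bregman d dd z u"
    using mirror_step_three_point[OF Q n x z d_diff d_sc mirr] inner_scaled_le_dual_norm[OF n e]
    by blast
  then show ?thesis by (simp add: field_simps)
qed

lemma is_mirr_iterates_in:
  assumes "x 0 \<in> Q" and "\<forall>k<N. \<exists>p. is_mirr Q d dd (x k) p (x (Suc k))" and "k \<le> N"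
  shows "x k \<in> Q"
  using assms(3)
proof (induction k)
  case 0 then show ?case using assms(1) by simp
next
  case (Suc k) then show ?case using assms(2) unfolding is_mirr_def by (metis Suc_le_lessD)
qed

lemma nonproductive_gap:
  fixes nrm :: "'a::euclidean_space \<Rightarrow> real"
  assumes n: "is_norm nrm" and x: "x \<in> Q" and z: "z \<in> Q" "g z \<le> 0"
    and gg: "is_delta_subgrad Q g \<delta> x (gg x)"
    and np: "\<not> productive nrm g gg e \<delta> x"
  shows "gg x \<noteq> 0 \<and> e < (gg x /\<^sub>R dual_norm nrm (gg x)) \<bullet> (x - z)"
proof -
  have "g z - g x \<ge> gg x \<bullet> (z - x) - \<delta>" using gg z unfolding is_delta_subgrad_def by blast
  moreover have "gg x \<bullet> (z - x) = - (gg x \<bullet> (x - z))" by (simp add: inner_diff_right)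
  ultimately have gap: "e * dual_norm nrm (gg x) < gg x \<bullet> (x - z)"
    using z np unfolding productive_def by linarith
  have "gg x \<noteq> 0" using gap dual_norm_zero[OF n] by auto
  with gap show ?thesis using dual_norm_pos[OF n] by (simp add: field_simps)
qed

lemma productive_constraint_bound:
  assumes "productive nrm g gg e \<delta> x" and "dual_norm nrm (gg x) \<le> Mg" and "0 \<le> e"
  shows "g x \<le> Mg * e + \<delta>"
  using assms mult_left_mono[of "dual_norm nrm (gg x)" Mg e] unfolding productive_def
  by (simp add: mult.commute)

lemma stop_iter_bounds:
  assumes "\<Theta>0 > 0" and "\<epsilon> > 0"
  shows "0 < stop_iter \<Theta>0 \<epsilon>" and "2 * \<Theta>0\<^sup>2 \<le> real (stop_iter \<Theta>0 \<epsilon>) * \<epsilon>\<^sup>2"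
proof -
  obtain n :: nat where "2 * \<Theta>0\<^sup>2 / \<epsilon>\<^sup>2 \<le> real n" using real_arch_simple by blast
  hence ge: "2 * \<Theta>0\<^sup>2 / \<epsilon>\<^sup>2 \<le> real (stop_iter \<Theta>0 \<epsilon>)" unfolding stop_iter_def by (rule LeastI)
  moreover have "2 * \<Theta>0\<^sup>2 / \<epsilon>\<^sup>2 > 0" using assms by simp
  ultimately show "0 < stop_iter \<Theta>0 \<epsilon>" by linarith
  show "2 * \<Theta>0\<^sup>2 \<le> real (stop_iter \<Theta>0 \<epsilon>) * \<epsilon>\<^sup>2" using ge assms by (simp add: divide_le_eq)
qed

lemma sum_decrements_gt:
  fixes V :: "nat \<Rightarrow> real"
  assumes "\<forall>k<N. c < V k - V (Suc k)" and "0 < N"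
  shows "real N * c < V 0 - V N"
proof -
  have "(\<Sum>k<N. c) < (\<Sum>k<N. V k - V (Suc k))"
    using assms by (intro sum_strict_mono) auto
  then show ?thesis by (simp add: sum_lessThan_telescope')
qed

lemma productive_step_exists:
  fixes V w :: "nat \<Rightarrow> real"
  assumes e: "0 < e" and N: "0 < N" "2 * \<Theta>\<^sup>2 \<le> real N * e\<^sup>2"
    and V: "V 0 \<le> \<Theta>\<^sup>2" "0 \<le> V N"
    and descent: "\<forall>k<N. e * w k \<le> e\<^sup>2 / 2 + V k - V (Suc k)"
    and nonprod: "\<forall>k<N. k \<notin> I \<longrightarrow> e < w k"
  shows "\<exists>k\<in>I. k < N \<and> w k \<le> e"
proof (rule ccontr)
  assume "\<not> ?thesis"
  hence "\<forall>k<N. e < w k" using nonprod by force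
  have "\<forall>k<N. e\<^sup>2 / 2 < V k - V (Suc k)"
  proof (intro allI impI)
    fix k assume "k < N"
    hence "e * e < e * w k" using \<open>\<forall>k<N. e < w k\<close> e by simp
    moreover have "e * w k \<le> e\<^sup>2 / 2 + V k - V (Suc k)" using descent \<open>k < N\<close> by blast
    ultimately show "e\<^sup>2 / 2 < V k - V (Suc k)" by (simp add: power2_eq_square)
  qed
  hence "real N * (e\<^sup>2 / 2) < V 0 - V N" using N(1) by (rule sum_decrements_gt)
  with N(2) V show False by linarith
qed

theorem theorem3:
  fixes Q :: "'a::euclidean_space set"
    and nrm :: "'a \<Rightarrow> real"
    and f g d :: "'a \<Rightarrow> real"
    and gf gg dd :: "'a \<Rightarrow> 'a"
    and xs :: 'a
    and x :: "nat \<Rightarrow> 'a"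
    and \<delta> \<epsilon> Mg \<Theta>0 :: real
  assumes Q: "closed Q" "convex Q"
    and nrm: "is_norm nrm"
    and fg_convex: "convex_on Q f" "convex_on Q g"
    and sol: "xs \<in> Q" "g xs \<le> 0" "\<forall>y\<in>Q. g y \<le> 0 \<longrightarrow> f xs \<le> f y"
    and \<delta>: "\<delta> \<ge> 0" and \<epsilon>: "\<epsilon> > 0"
    and gf: "\<forall>y\<in>Q. is_delta_subgrad Q f \<delta> y (gf y)"
    and gg: "\<forall>y\<in>Q. is_delta_subgrad Q g \<delta> y (gg y)"
    and Mg: "\<forall>y\<in>Q. dual_norm nrm (gg y) \<le> Mg"
    and d_diff: "\<forall>y\<in>Q. (d has_derivative (\<lambda>h. dd y \<bullet> h)) (at y within Q)"
    and d_sc: "strongly_convex_1 nrm Q d"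
    and x0: "x 0 \<in> Q" "\<forall>y\<in>Q. d (x 0) \<le> d y"
    and \<Theta>0: "\<Theta>0 > 0" "bregman d dd xs (x 0) \<le> \<Theta>0\<^sup>2"
    and step_prod: "\<forall>N < stop_iter \<Theta>0 \<epsilon>. productive nrm g gg \<epsilon> \<delta> (x N) \<longrightarrow>
          is_mirr Q d dd (x N) ((\<epsilon> / dual_norm nrm (gf (x N))) *\<^sub>R gf (x N)) (x (Suc N))"
    and step_nonprod: "\<forall>N < stop_iter \<Theta>0 \<epsilon>. \<not> productive nrm g gg \<epsilon> \<delta> (x N) \<longrightarrow>
          is_mirr Q d dd (x N) ((\<epsilon> / dual_norm nrm (gg (x N))) *\<^sub>R gg (x N)) (x (Suc N))"
    and gf_nz: "\<forall>N < stop_iter \<Theta>0 \<epsilon>. productive nrm g gg \<epsilon> \<delta> (x N) \<longrightarrow> gf (x N) \<noteq> 0"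
  defines "I \<equiv> {k. k < stop_iter \<Theta>0 \<epsilon> \<and> productive nrm g gg \<epsilon> \<delta> (x k)}"
  shows "I \<noteq> {} \<and>
         Min ((\<lambda>k. v_delta nrm gf (x k) xs) ` I) \<le> \<epsilon> \<and>
         Max ((\<lambda>k. g (x k)) ` I) \<le> Mg * \<epsilon> + \<delta>"
proof -
  define N where "N = stop_iter \<Theta>0 \<epsilon>"
  define G where "G k = (if productive nrm g gg \<epsilon> \<delta> (x k) then gf (x k) else gg (x k))" for k
  define w where "w k = (G k /\<^sub>R dual_norm nrm (G k)) \<bullet> (x k - xs)" for k
  define V where "V k = bregman d dd xs (x k)" for k
  have I: "I = {k. k < N \<and> productive nrm g gg \<epsilon> \<delta> (x k)}" using I_def N_def by simp
  have mirr: "\<forall>k<N. is_mirr Q d dd (x k) ((\<epsilon> / dual_norm nrm (G k)) *\<^sub>R G k) (x (Suc k))"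
    using step_prod step_nonprod unfolding N_def G_def by auto
  have xQ: "k \<le> N \<Longrightarrow> x k \<in> Q" for k
    using is_mirr_iterates_in[where x = x, OF x0(1)] mirr by blast
  have descent: "\<forall>k<N. \<epsilon> * w k \<le> \<epsilon>\<^sup>2 / 2 + V k - V (Suc k)"
    using normalized_mirror_step[OF Q(2) nrm _ sol(1) _ d_diff d_sc] mirr xQ \<epsilon>
    unfolding w_def V_def by simp
  have nonprod: "\<forall>k<N. k \<notin> I \<longrightarrow> \<epsilon> < w k"
    using nonproductive_gap[OF nrm _ sol(1), where g = g and gg = gg, OF _ sol(2)] gg xQ
    unfolding I w_def G_def by (simp del: scaleR_scaleR) (meson less_imp_le_nat)
  have "0 \<le> V N" unfolding V_def by (rule bregman_nonneg[OF Q(2) sol(1) xQ d_diff d_sc]) simp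
  then obtain k where k: "k \<in> I" "w k \<le> \<epsilon>"
    using productive_step_exists[OF \<epsilon> stop_iter_bounds[OF \<Theta>0(1) \<epsilon>, folded N_def] _ _ descent nonprod]
      \<Theta>0(2) unfolding V_def by blast
  have "v_delta nrm gf (x k) xs = w k" using k(1) gf_nz unfolding I w_def G_def v_delta_def N_def by auto
  then have "\<exists>j\<in>I. v_delta nrm gf (x j) xs \<le> \<epsilon>" using k by metis
  moreover have "finite I" "I \<noteq> {}" using k(1) unfolding I by auto
  moreover have "\<forall>j\<in>I. g (x j) \<le> Mg * \<epsilon> + \<delta>"
    using productive_constraint_bound Mg xQ \<epsilon> unfolding I by fastforce
  ultimately show ?thesis by (simp add: Min_le_iff Max_le_iff)
qed

end
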